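(* Let $K$ be an algebraically closed field complete with respect to a nontrivial nonarchimedean absolute value, let $a\in K^N$ and $r\in|K^*|$, and let $\mathcal{A}$ be a family of analytic functions on $\bar B(a,r)$. Assume there is a constant $C>0$ with $|\Psi(x)|\le C$ for all $x\in\bar B(a,r)$ and all $\Psi\in\mathcal{A}$. Then for all $x,y\in\bar B(a,r)$ and all $\Psi,\Lambda\in\mathcal{A}$, $$|\Psi(x)\Lambda(y)-\Psi(y)\Lambda(x)|\le\frac{C^2}{r}\|x-y\|.$$
   Context: For $x\in K^N$, $\|x\|=\max_i|x_i|$, and $\bar B(a,r)=\{x\in K^N:\|x-a\|\le r\}$. A formal power series $\Psi(x)=\sum_{i_1,\dots,i_N\ge0}c_{i_1\cdots i_N}(x_1-a_1)^{i_1}\cdots(x_N-a_N)^{i_N}$ with $c_{i_1\cdots i_N}\in K$ is analytic on $\bar B(a,r)$ if $|c_{i_1\cdots i_N}|\,r^{i_1+\cdots+i_N}\to0$ as $i_1+\cdots+i_N\to\infty$; it then defines a function $\Psi:\bar B(a,r)\to K$. *)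

theory Defs
  imports "HOL-Computational_Algebra.Polynomial"
begin

definition nonarch_abs :: "('a::field \<Rightarrow> real) \<Rightarrow> bool" where
  "nonarch_abs v \<longleftrightarrow>
     (\<forall>x. v x \<ge> 0) \<and> (\<forall>x. v x = 0 \<longleftrightarrow> x = 0) \<and>
     (\<forall>x y. v (x * y) = v x * v y) \<and>
     (\<forall>x y. v (x + y) \<le> max (v x) (v y))"

definition nontrivial_abs :: "('a::field \<Rightarrow> real) \<Rightarrow> bool" where
  "nontrivial_abs v \<longleftrightarrow> (\<exists>x. x \<noteq> 0 \<and> v x \<noteq> 1)"

definition v_converges_to :: "('a::field \<Rightarrow> real) \<Rightarrow> (nat \<Rightarrow> 'a) \<Rightarrow> 'a \<Rightarrow> bool" where
  "v_converges_to v s l \<longleftrightarrow> (\<forall>\<epsilon>>0. \<exists>M0. \<forall>M\<ge>M0. v (s M - l) < \<epsilon>)"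

definition v_complete :: "('a::field \<Rightarrow> real) \<Rightarrow> bool" where
  "v_complete v \<longleftrightarrow>
     (\<forall>s. (\<forall>\<epsilon>>0. \<exists>M0. \<forall>m\<ge>M0. \<forall>n\<ge>M0. v (s m - s n) < \<epsilon>)
          \<longrightarrow> (\<exists>l. v_converges_to v s l))"

definition alg_closed_field :: "'a::field itself \<Rightarrow> bool" where
  "alg_closed_field _ \<longleftrightarrow> (\<forall>p::'a poly. degree p > 0 \<longrightarrow> (\<exists>x. poly p x = 0))"

definition vnorm :: "('a::field \<Rightarrow> real) \<Rightarrow> ('n::finite \<Rightarrow> 'a) \<Rightarrow> real" where
  "vnorm v x = Max (range (\<lambda>i. v (x i)))"

definition cball_v :: "('a::field \<Rightarrow> real) \<Rightarrow> ('n::finite \<Rightarrow> 'a) \<Rightarrow> real \<Rightarrow> ('n \<Rightarrow> 'a) set" where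
  "cball_v v a r = {x. vnorm v (x - a) \<le> r}"

definition mdeg :: "('n::finite \<Rightarrow> nat) \<Rightarrow> nat" where
  "mdeg I = (\<Sum>i\<in>UNIV. I i)"

definition analytic_coeffs :: "('a::field \<Rightarrow> real) \<Rightarrow> real \<Rightarrow> (('n::finite \<Rightarrow> nat) \<Rightarrow> 'a) \<Rightarrow> bool" where
  "analytic_coeffs v r c \<longleftrightarrow>
     (\<forall>\<epsilon>>0. \<exists>M. \<forall>I. mdeg I \<ge> M \<longrightarrow> v (c I) * r ^ mdeg I < \<epsilon>)"

definition ps_partial :: "(('n::finite \<Rightarrow> nat) \<Rightarrow> 'a::field) \<Rightarrow> ('n \<Rightarrow> 'a) \<Rightarrow> ('n \<Rightarrow> 'a) \<Rightarrow> nat \<Rightarrow> 'a" where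
  "ps_partial c a x M = (\<Sum>I\<in>{I. mdeg I \<le> M}. c I * (\<Prod>i\<in>UNIV. (x i - a i) ^ I i))"

definition analytic_on_cball :: "('a::field \<Rightarrow> real) \<Rightarrow> ('n::finite \<Rightarrow> 'a) \<Rightarrow> real \<Rightarrow> (('n \<Rightarrow> 'a) \<Rightarrow> 'a) \<Rightarrow> bool" where
  "analytic_on_cball v a r f \<longleftrightarrow>
     (\<exists>c. analytic_coeffs v r c \<and>
          (\<forall>x\<in>cball_v v a r. v_converges_to v (ps_partial c a x) (f x)))"

end

theory Submission
  imports Defs "HOL-Library.FuncSet"
begin

text \<open>
  Every bounded analytic \<Psi> is (C/r)-Lipschitz. Restricted to the line through x and y,
  rescaled so that the unit disc lands in the ball, a partial sum of \<Psi> becomes a polynomial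
  bounded by C on the unit disc. Over an algebraically closed field such a polynomial has all
  coefficients bounded by C (a maximum modulus principle), so its increment between the
  parameters 0 and s with |s| = \<parallel>x - y\<parallel>/r is at most C\<parallel>x - y\<parallel>/r, and the ultrametric
  inequality absorbs the truncation error. The theorem then follows from
  \<Psi>(x)\<Lambda>(y) - \<Psi>(y)\<Lambda>(x) = \<Psi>(x)(\<Lambda>(y) - \<Lambda>(x)) + \<Lambda>(x)(\<Psi>(x) - \<Psi>(y)).
\<close>

lemma finite_mdeg_le: "finite {I :: 'n::finite \<Rightarrow> nat. mdeg I \<le> M}"
proof -
  have "{I :: 'n \<Rightarrow> nat. mdeg I \<le> M} \<subseteq> Pi\<^sub>E UNIV (\<lambda>_. {..M})"
  proof
    fix I :: "'n \<Rightarrow> nat" assume "I \<in> {I. mdeg I \<le> M}"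
    then have "I i \<le> M" for i
      unfolding mdeg_def using member_le_sum[of i UNIV I] by simp
    then show "I \<in> Pi\<^sub>E UNIV (\<lambda>_. {..M})" by (simp add: PiE_UNIV_domain)
  qed
  moreover have "finite (Pi\<^sub>E (UNIV :: 'n set) (\<lambda>_. {..M}))" by (rule finite_PiE) auto
  ultimately show ?thesis by (rule finite_subset)
qed

lemma ps_partial_along_line:
  fixes c :: "('n::finite \<Rightarrow> nat) \<Rightarrow> 'a::field"
  shows "\<exists>h. \<forall>s. poly h s = ps_partial c a (\<lambda>j. x j + s * w j) M"
proof (intro exI allI)
  fix s
  show "poly (\<Sum>I\<in>{I. mdeg I \<le> M}. smult (c I) (\<Prod>j\<in>UNIV. [:x j - a j, w j:] ^ I j)) s
      = ps_partial c a (\<lambda>j. x j + s * w j) M"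
    unfolding ps_partial_def by (simp add: poly_sum poly_prod algebra_simps)
qed

locale nonarch_field =
  fixes v :: "'a::field \<Rightarrow> real"
  assumes nonarch: "nonarch_abs v"
begin

lemma v_nonneg: "0 \<le> v x"
  using nonarch unfolding nonarch_abs_def by auto

lemma v_zero_iff: "v x = 0 \<longleftrightarrow> x = 0"
  using nonarch unfolding nonarch_abs_def by auto

lemma v_mult: "v (x * y) = v x * v y"
  using nonarch unfolding nonarch_abs_def by auto

lemma v_add: "v (x + y) \<le> max (v x) (v y)"
  using nonarch unfolding nonarch_abs_def by auto

lemma v_0 [simp]: "v 0 = 0"
  using v_zero_iff by simp

lemma v_1 [simp]: "v 1 = 1"
proof -
  have "v 1 = v 1 * v 1" using v_mult[of 1 1] by simp
  moreover have "v 1 \<noteq> 0" using v_zero_iff by simp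
  ultimately show ?thesis by simp
qed

lemma v_uminus [simp]: "v (- x) = v x"
proof -
  have "v (-1) * v (-1) = 1" using v_mult[of "-1" "-1"] by simp
  then have "(v (-1) - 1) * (v (-1) + 1) = 0" by (simp add: algebra_simps)
  with v_nonneg[of "-1"] have "v (-1) = 1" by auto
  then show ?thesis using v_mult[of "-1" x] by simp
qed

lemma v_diff: "v (x - y) \<le> max (v x) (v y)"
  using v_add[of x "- y"] by simp

lemma v_minus_commute: "v (x - y) = v (y - x)"
  using v_uminus[of "x - y"] by simp

lemma v_power: "v (x ^ n) = v x ^ n"
  by (induction n) (simp_all add: v_mult)

lemma v_prod: "v (prod f S) = (\<Prod>i\<in>S. v (f i))"
  by (induction S rule: infinite_finite_induct) (simp_all add: v_mult)

lemma v_inverse: "x \<noteq> 0 \<Longrightarrow> v (inverse x) = 1 / v x"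
  using v_mult[of x "inverse x"] v_zero_iff[of x] by (simp add: field_simps)

lemma v_divide: "y \<noteq> 0 \<Longrightarrow> v (x / y) = v x / v y"
  using v_mult[of x "inverse y"] v_inverse[of y] by (simp add: divide_inverse)

lemma v_sum_le:
  assumes "finite S" "0 \<le> B" "\<And>i. i \<in> S \<Longrightarrow> v (f i) \<le> B"
  shows "v (sum f S) \<le> B"
  using assms
proof (induction S rule: finite_induct)
  case (insert x F)
  then have "v (f x) \<le> B" "v (sum f F) \<le> B" by simp_all
  then show ?case using insert.hyps v_add[of "f x" "sum f F"] by simp
qed simp

lemma v_diff_eq_of_less: "v y < v x \<Longrightarrow> v (x - y) = v x"
  using v_diff[of x y] v_add[of "x - y" y] by (simp add: max_def split: if_splits)

lemma v_diff_le_of_approx: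
  assumes "v (p - p') \<le> e" "v (q - q') \<le> e" "v (p' - q') \<le> e"
  shows "v (p - q) \<le> e"
proof -
  have "p - q = ((p - p') + (p' - q')) + - (q - q')" by simp
  then show ?thesis
    using assms v_add[of "(p - p') + (p' - q')" "- (q - q')"] v_add[of "p - p'" "p' - q'"]
    by (metis max.bounded_iff order_trans v_uminus)
qed

lemma exists_unit_disc_point_far_from:
  assumes ac: "alg_closed_field TYPE('a)" and T: "finite T" "\<forall>t\<in>T. v t \<le> 1"
  shows "\<exists>s. v s \<le> 1 \<and> (\<forall>t\<in>T. 1 \<le> v (s - t))"
proof (cases "T = {}")
  case True
  then show ?thesis by (intro exI[of _ 0]) simp
next
  case False
  define q :: "'a poly" where "q = (\<Prod>t\<in>T. [:-t, 1:])"
  have "degree q = card T" unfolding q_def by (subst degree_prod_eq_sum_degree) auto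
  with False T have "degree (q - 1) > 0"
    using degree_add_eq_left[of "-1" q] by (simp add: card_gt_0_iff)
  \<comment> \<open>A root s of \<Prod>(X - t) - 1 has \<Prod>|s - t| = 1, which forces every factor to be 1.\<close>
  then obtain s where "poly (q - 1) s = 0" using ac unfolding alg_closed_field_def by blast
  then have prod1: "(\<Prod>t\<in>T. v (s - t)) = 1"
    unfolding q_def using v_prod[of "\<lambda>t. s - t" T] by (simp add: poly_prod)
  have s1: "v s \<le> 1"
  proof (rule ccontr)
    assume "\<not> v s \<le> 1"
    then have "\<forall>t\<in>T. v (s - t) = v s" using T(2) v_diff_eq_of_less by force
    then have "(\<Prod>t\<in>T. v (s - t)) = v s ^ card T" by simp
    moreover have "v s ^ card T > 1" using \<open>\<not> v s \<le> 1\<close> False T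
      by (intro one_less_power) (auto simp: card_gt_0_iff)
    ultimately show False using prod1 by simp
  qed
  have le1: "\<forall>t\<in>T. v (s - t) \<le> 1"
    using v_diff s1 T(2) by (meson max.bounded_iff order_trans)
  have "1 \<le> v (s - t)" if "t \<in> T" for t
  proof -
    have "(\<Prod>t\<in>T. v (s - t)) = v (s - t) * (\<Prod>t\<in>T - {t}. v (s - t))"
      using that T by (simp add: prod.remove)
    moreover have "(\<Prod>t\<in>T - {t}. v (s - t)) \<le> 1"
      using le1 by (intro prod_le_1) (auto simp: v_nonneg)
    ultimately show ?thesis using prod1 v_nonneg[of "s - t"] by (metis mult_left_le mult.commute)
  qed
  with s1 show ?thesis by blast
qed

text \<open>
  The induction needs the bound only away from finitely many unit discs: dividing p by
  X - s keeps the quotient bounded by C outside the unit disc around s, which is then excluded.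
\<close>
lemma poly_coeff_bound_off_discs:
  assumes ac: "alg_closed_field TYPE('a)" and C: "0 \<le> C"
  shows "finite T \<Longrightarrow> \<forall>t\<in>T. v t \<le> 1 \<Longrightarrow>
    \<forall>s. v s \<le> 1 \<longrightarrow> (\<forall>t\<in>T. 1 \<le> v (s - t)) \<longrightarrow> v (poly p s) \<le> C \<Longrightarrow>
    v (coeff p k) \<le> C"
proof (induction "degree p" arbitrary: p T k rule: less_induct)
  case less
  obtain s0 where s0: "v s0 \<le> 1" "\<forall>t\<in>T. 1 \<le> v (s0 - t)"
    using exists_unit_disc_point_far_from[OF ac less(2,3)] by blast
  have ps0: "v (poly p s0) \<le> C" using less(4) s0 by blast
  show ?case
  proof (cases "degree p = 0")
    case True
    then obtain b where "p = [:b:]" by (rule degree_eq_zeroE)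
    then show ?thesis using ps0 C by (cases k) simp_all
  next
    case False
    define q where "q = synthetic_div p s0"
    have pq: "p = [:-s0, 1:] * q + [:poly p s0:]"
      unfolding q_def by (rule synthetic_div_correct'[symmetric])
    have q_bound: "v (poly q s) \<le> C" if "v s \<le> 1" "\<forall>t\<in>insert s0 T. 1 \<le> v (s - t)" for s
    proof -
      have "poly p s - poly p s0 = (s - s0) * poly q s"
        by (subst (2) pq, subst pq) (simp add: algebra_simps)
      moreover have "v (poly p s) \<le> C" using less(4) that by simp
      then have "v (poly p s - poly p s0) \<le> C" using ps0 v_diff[of "poly p s" "poly p s0"] by simp
      ultimately have "v (s - s0) * v (poly q s) \<le> C" by (simp add: v_mult)
      moreover have "v (poly q s) \<le> v (s - s0) * v (poly q s)"
        using that(2) v_nonneg[of "poly q s"] by (simp add: mult_le_cancel_right1)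
      ultimately show ?thesis by simp
    qed
    have cq: "v (coeff q j) \<le> C" for j
    proof (rule less(1)[where T = "insert s0 T"])
      show "degree q < degree p" unfolding q_def using False by (simp add: degree_synthetic_div)
    qed (use less(2,3) s0 q_bound in auto)
    have sq: "v (- s0 * coeff q j) \<le> C" for j
      using s0(1) cq[of j] mult_mono[of "v s0" 1 "v (coeff q j)" C] C
      by (simp add: v_mult v_nonneg)
    define b where "b = (case k of 0 \<Rightarrow> poly p s0 | Suc j \<Rightarrow> coeff q j)"
    have "coeff p k = - s0 * coeff q k + b"
      unfolding b_def by (subst pq) (simp add: coeff_pCons split: nat.split)
    moreover have "v b \<le> C" using ps0 cq unfolding b_def by (simp split: nat.split)
    ultimately show ?thesis
      using v_add[of "- s0 * coeff q k" b] sq[of k] by (metis max.bounded_iff order_trans)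
  qed
qed

corollary poly_coeff_bound_unit_disc:
  assumes "alg_closed_field TYPE('a)" "0 \<le> C" "\<And>s. v s \<le> 1 \<Longrightarrow> v (poly p s) \<le> C"
  shows "v (coeff p k) \<le> C"
  using poly_coeff_bound_off_discs[of C "{}" p k] assms by simp

lemma poly_increment_bound:
  assumes coeff: "\<And>k. v (coeff h k) \<le> C" and C: "0 \<le> C" and s: "v s \<le> 1"
  shows "v (poly h s - poly h 0) \<le> C * v s"
proof -
  have "poly h s - poly h 0 = (\<Sum>i\<le>degree h. coeff h i * (s ^ i - 0 ^ i))"
    by (simp add: poly_altdef sum_subtractf right_diff_distrib)
  also have "v \<dots> \<le> C * v s"
  proof (rule v_sum_le)
    fix i
    show "v (coeff h i * (s ^ i - 0 ^ i)) \<le> C * v s"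
    proof (cases i)
      case (Suc j)
      have "v s ^ i \<le> v s"
        using Suc s v_nonneg[of s] power_le_one[of "v s" j] mult_left_le by auto
      then show ?thesis
        using Suc coeff[of i] mult_mono[of "v (coeff h i)" C "v s ^ i" "v s"] C
        by (simp add: v_mult v_power v_nonneg)
    qed (simp add: C v_nonneg)
  qed (simp_all add: C v_nonneg)
  finally show ?thesis .
qed

lemma vnorm_ge: "v (x i) \<le> vnorm v x"
  unfolding vnorm_def by (rule Max_ge) auto

lemma vnorm_le_iff: "vnorm v x \<le> B \<longleftrightarrow> (\<forall>i. v (x i) \<le> B)"
  unfolding vnorm_def by (subst Max_le_iff) auto

lemma vnorm_attained: "\<exists>i. vnorm v x = v (x i)"
proof -
  have "vnorm v x \<in> range (\<lambda>i. v (x i))" unfolding vnorm_def by (rule Max_in) auto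
  then show ?thesis by auto
qed

lemma mem_cball_v_iff: "z \<in> cball_v v a r \<longleftrightarrow> (\<forall>i. v (z i - a i) \<le> r)"
  unfolding cball_v_def by (simp add: vnorm_le_iff)

lemma vnorm_diff_le_radius:
  assumes "x \<in> cball_v v a r" "y \<in> cball_v v a r"
  shows "vnorm v (x - y) \<le> r"
proof -
  have "v (x i - y i) \<le> r" for i
  proof -
    have "v (x i - a i) \<le> r" "v (y i - a i) \<le> r" using assms by (simp_all add: mem_cball_v_iff)
    then show ?thesis using v_diff[of "x i - a i" "y i - a i"] by simp
  qed
  then show ?thesis by (simp add: vnorm_le_iff)
qed

lemma line_in_cball_v:
  assumes "x \<in> cball_v v a r" "vnorm v w \<le> r" "v s \<le> 1"
  shows "(\<lambda>j. x j + s * w j) \<in> cball_v v a r"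
  unfolding mem_cball_v_iff
proof
  fix j
  have "v (s * w j) \<le> r"
    using assms(2,3) vnorm_ge[of w j] mult_mono[of "v s" 1 "v (w j)" r]
    by (simp add: v_mult v_nonneg)
  moreover have "v (x j - a j) \<le> r" using assms(1) by (simp add: mem_cball_v_iff)
  ultimately have "v ((x j - a j) + s * w j) \<le> r" using v_add[of "x j - a j" "s * w j"] by simp
  then show "v (x j + s * w j - a j) \<le> r" by (simp add: algebra_simps)
qed

lemma monomial_bound:
  assumes "\<forall>i. v (z i - a i) \<le> r"
  shows "v (b * (\<Prod>i\<in>UNIV. (z i - a i) ^ I i)) \<le> v b * r ^ mdeg I"
proof -
  have "v (\<Prod>i\<in>UNIV. (z i - a i) ^ I i) = (\<Prod>i\<in>UNIV. v (z i - a i) ^ I i)"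
    by (simp add: v_prod v_power)
  also have "\<dots> \<le> (\<Prod>i\<in>UNIV. r ^ I i)"
    by (intro prod_mono conjI power_mono) (simp_all add: v_nonneg assms)
  also have "\<dots> = r ^ mdeg I" unfolding mdeg_def by (simp add: power_sum)
  finally show ?thesis by (simp add: v_mult mult_left_mono v_nonneg)
qed

lemma ps_partial_tail_bound:
  fixes z a :: "'n::finite \<Rightarrow> 'a"
  assumes z: "\<forall>i. v (z i - a i) \<le> r" and conv: "v_converges_to v (ps_partial c a z) f"
    and e: "0 \<le> e" and tail: "\<forall>I. M < mdeg I \<longrightarrow> v (c I) * r ^ mdeg I \<le> e"
  shows "v (f - ps_partial c a z M) \<le> e"
proof (rule field_le_epsilon)
  have step: "v (ps_partial c a z M' - ps_partial c a z M) \<le> e" if "M \<le> M'" for M'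
  proof -
    have "{I. mdeg I \<le> M} \<subseteq> {I. mdeg I \<le> M'}" using that by auto
    then have "ps_partial c a z M' - ps_partial c a z M =
        (\<Sum>I\<in>{I. mdeg I \<le> M'} - {I. mdeg I \<le> M}. c I * (\<Prod>i\<in>UNIV. (z i - a i) ^ I i))"
      unfolding ps_partial_def by (rule sum_diff[OF finite_mdeg_le, symmetric])
    also have "v \<dots> \<le> e"
    proof (intro v_sum_le finite_Diff finite_mdeg_le e)
      fix I :: "'n \<Rightarrow> nat" assume "I \<in> {I. mdeg I \<le> M'} - {I. mdeg I \<le> M}"
      then have "v (c I) * r ^ mdeg I \<le> e" using tail by simp
      then show "v (c I * (\<Prod>i\<in>UNIV. (z i - a i) ^ I i)) \<le> e"
        using monomial_bound[OF z, of "c I" I] by simp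
    qed
    finally show ?thesis .
  qed
  fix h :: real assume h: "0 < h"
  then obtain M0 where M0: "\<forall>M'\<ge>M0. v (ps_partial c a z M' - f) < h"
    using conv unfolding v_converges_to_def by blast
  define M' where "M' = max M0 M"
  have "f - ps_partial c a z M = (f - ps_partial c a z M') + (ps_partial c a z M' - ps_partial c a z M)"
    by simp
  then show "v (f - ps_partial c a z M) \<le> e + h"
    using v_add[of "f - ps_partial c a z M'"] M0 step[of M'] v_minus_commute[of f] e h
    unfolding M'_def by (smt (verit) max.cobounded1 max.cobounded2)
qed

lemma bounded_analytic_partial_sum_approx:
  assumes an: "analytic_on_cball v a r \<Psi>" and bd: "\<forall>z\<in>cball_v v a r. v (\<Psi> z) \<le> C"
    and e: "0 < e" "e \<le> C"
  obtains P where "\<And>z. z \<in> cball_v v a r \<Longrightarrow> v (\<Psi> z - P z) \<le> e"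
    and "\<And>z. z \<in> cball_v v a r \<Longrightarrow> v (P z) \<le> C"
    and "\<And>x w. \<exists>h. \<forall>s. poly h s = P (\<lambda>j. x j + s * w j)"
proof -
  obtain c where "analytic_coeffs v r c"
    and conv: "\<forall>z\<in>cball_v v a r. v_converges_to v (ps_partial c a z) (\<Psi> z)"
    using an unfolding analytic_on_cball_def by blast
  then obtain M where "\<forall>I. M \<le> mdeg I \<longrightarrow> v (c I) * r ^ mdeg I < e"
    using e unfolding analytic_coeffs_def by blast
  then have tail: "\<forall>I. M < mdeg I \<longrightarrow> v (c I) * r ^ mdeg I \<le> e" by (simp add: less_imp_le)
  define P where "P z = ps_partial c a z M" for z
  have approx: "v (\<Psi> z - P z) \<le> e" if "z \<in> cball_v v a r" for z
    using ps_partial_tail_bound[of z a r c "\<Psi> z" e M] that conv e tail mem_cball_v_iff[of z]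
    unfolding P_def by simp
  moreover have "v (P z) \<le> C" if "z \<in> cball_v v a r" for z
  proof -
    have "v (\<Psi> z) \<le> C" using bd that by blast
    then show ?thesis using v_diff[of "\<Psi> z" "\<Psi> z - P z"] approx[OF that] e by simp
  qed
  moreover have "\<exists>h. \<forall>s. poly h s = P (\<lambda>j. x j + s * w j)" for x w
    unfolding P_def by (rule ps_partial_along_line)
  ultimately show ?thesis using that by blast
qed

lemma bounded_analytic_lipschitz:
  assumes ac: "alg_closed_field TYPE('a)" and t: "t \<noteq> 0" "v t = r" and C: "0 < C"
    and an: "analytic_on_cball v a r \<Psi>" and bd: "\<forall>z\<in>cball_v v a r. v (\<Psi> z) \<le> C"
    and x: "x \<in> cball_v v a r" and y: "y \<in> cball_v v a r"
  shows "v (\<Psi> x - \<Psi> y) \<le> C / r * vnorm v (x - y)"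
proof -
  have r: "0 < r" using t v_nonneg[of t] v_zero_iff[of t] by simp
  define \<delta> where "\<delta> = vnorm v (x - y)"
  obtain i where i: "\<delta> = v (x i - y i)" using vnorm_attained[of "x - y"] unfolding \<delta>_def by auto
  show ?thesis
  proof (cases "\<delta> = 0")
    case True
    then have "v (x j - y j) = 0" for j
      using vnorm_ge[of "x - y" j] v_nonneg[of "x j - y j"] unfolding \<delta>_def by simp
    then have "x = y" by (simp add: v_zero_iff fun_eq_iff)
    with True show ?thesis unfolding \<delta>_def by simp
  next
    case False
    then have \<delta>: "0 < \<delta>" "\<delta> \<le> r"
      using i v_nonneg vnorm_diff_le_radius[OF x y] unfolding \<delta>_def by (auto simp: order_le_less)
    obtain P where approx: "\<And>z. z \<in> cball_v v a r \<Longrightarrow> v (\<Psi> z - P z) \<le> C * \<delta> / r"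
      and P_bound: "\<And>z. z \<in> cball_v v a r \<Longrightarrow> v (P z) \<le> C"
      and P_line: "\<And>x w. \<exists>h. \<forall>s. poly h s = P (\<lambda>j. x j + s * w j)"
      using bounded_analytic_partial_sum_approx[OF an bd, of "C * \<delta> / r"] C r \<delta>
      by (auto simp: field_simps)
    \<comment> \<open>Parametrize the line so that |s| \<le> 1 stays in the ball and s = 1/\<mu> hits y.\<close>
    define \<mu> where "\<mu> = t / (y i - x i)"
    have \<mu>: "\<mu> \<noteq> 0" "v \<mu> = r / \<delta>"
      using i False t v_minus_commute[of "x i"] v_zero_iff[of "y i - x i"]
      unfolding \<mu>_def by (auto simp: v_divide)
    define w where "w j = \<mu> * (y j - x j)" for j
    have "v (w j) \<le> r" for j
      using vnorm_ge[of "x - y" j] v_minus_commute[of "x j"] \<delta> \<mu>(2)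
        mult_left_mono[of "v (y j - x j)" \<delta> "r / \<delta>"]
      unfolding w_def \<delta>_def by (simp add: v_mult)
    then have w: "vnorm v w \<le> r" by (simp add: vnorm_le_iff)
    obtain h where h: "\<And>s. poly h s = P (\<lambda>j. x j + s * w j)" using P_line by blast
    have "v (coeff h k) \<le> C" for k
      using poly_coeff_bound_unit_disc[OF ac] C P_bound line_in_cball_v[OF x w] h by simp
    moreover have "v (inverse \<mu>) = \<delta> / r" "\<delta> / r \<le> 1"
      using \<mu> \<delta> r by (simp_all add: v_inverse)
    ultimately have "v (poly h (inverse \<mu>) - poly h 0) \<le> C * \<delta> / r"
      using poly_increment_bound[of h C "inverse \<mu>"] C by simp
    moreover have "(\<lambda>j. x j + inverse \<mu> * w j) = y" "(\<lambda>j. x j + 0 * w j) = x"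
      using \<mu>(1) unfolding w_def by (auto simp: mult.assoc[symmetric])
    ultimately have "v (P y - P x) \<le> C * \<delta> / r" using h by metis
    then have "v (\<Psi> x - \<Psi> y) \<le> C * \<delta> / r"
      using v_diff_le_of_approx approx[OF x] approx[OF y] v_minus_commute by metis
    then show ?thesis unfolding \<delta>_def by simp
  qed
qed

lemma cross_difference_bound:
  assumes "v p \<le> C" "v l \<le> C" "v (p - p') \<le> B" "v (l' - l) \<le> B"
  shows "v (p * l' - p' * l) \<le> C * B"
proof -
  have "p * l' - p' * l = p * (l' - l) + l * (p - p')" by (simp add: algebra_simps)
  moreover have "v p * v (l' - l) \<le> C * B" "v l * v (p - p') \<le> C * B"
    using assms by (auto intro!: mult_mono simp: v_nonneg order_trans[OF v_nonneg])
  ultimately show ?thesis using v_add[of "p * (l' - l)" "l * (p - p')"] by (simp add: v_mult)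
qed

end

theorem lemma22:
  fixes v :: "'a::field \<Rightarrow> real"
    and a :: "'n::finite \<Rightarrow> 'a"
    and r C :: real
    and \<A> :: "(('n \<Rightarrow> 'a) \<Rightarrow> 'a) set"
  assumes "nonarch_abs v" and "nontrivial_abs v" and "v_complete v"
    and "alg_closed_field TYPE('a)"
    and "\<exists>t. t \<noteq> 0 \<and> v t = r"
    and "\<forall>\<Psi>\<in>\<A>. analytic_on_cball v a r \<Psi>"
    and "C > 0"
    and "\<forall>\<Psi>\<in>\<A>. \<forall>x\<in>cball_v v a r. v (\<Psi> x) \<le> C"
  shows "\<forall>x\<in>cball_v v a r. \<forall>y\<in>cball_v v a r. \<forall>\<Psi>\<in>\<A>. \<forall>\<Lambda>\<in>\<A>.
           v (\<Psi> x * \<Lambda> y - \<Psi> y * \<Lambda> x) \<le> C\<^sup>2 / r * vnorm v (x - y)"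
proof (intro ballI)
  interpret nonarch_field v by unfold_locales (rule assms(1))
  fix x y \<Psi> \<Lambda>
  assume x: "x \<in> cball_v v a r" and y: "y \<in> cball_v v a r" and "\<Psi> \<in> \<A>" "\<Lambda> \<in> \<A>"
  obtain t where t: "t \<noteq> 0" "v t = r" using assms(5) by blast
  have "v (F x - F y) \<le> C / r * vnorm v (x - y)" if "F \<in> \<A>" for F
    using bounded_analytic_lipschitz[OF assms(4) t assms(7) _ _ x y] assms(6,8) that by blast
  then have "v (\<Psi> x * \<Lambda> y - \<Psi> y * \<Lambda> x) \<le> C * (C / r * vnorm v (x - y))"
    using cross_difference_bound assms(8) \<open>\<Psi> \<in> \<A>\<close> \<open>\<Lambda> \<in> \<A>\<close> x v_minus_commute by metis
  then show "v (\<Psi> x * \<Lambda> y - \<Psi> y * \<Lambda> x) \<le> C\<^sup>2 / r * vnorm v (x - y)"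
    by (simp add: power2_eq_square)
qed

end
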